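(* In the setting described in the context, for every $v=(v_1,v_2)\in V$, $$\langle\tilde\lambda^h,v\rangle_{-1,1}=\langle\tilde\lambda^h_1,v_1\rangle_{-1,1},$$ and $\langle\tilde\lambda^h_1,v_1\rangle_{-1,1}\ge0$ whenever $v_1\ge0$.
   Context: Let $\Omega\subset\mathbb{R}^2$ be a bounded polygonal Lipschitz domain with boundary partitioned into relatively open, pairwise disjoint parts $\Gamma_D,\Gamma_N,\Gamma_C$, $\mathrm{meas}(\Gamma_D)>0$, $\overline{\Gamma_C}\subset\partial\Omega\setminus\overline{\Gamma_D}$, outward unit normal on $\Gamma_C$ equal to $e_1=(1,0)$. Let $\sigma(v)=\chi\,\mathrm{tr}(\epsilon(v))I+2\mu\epsilon(v)$ ($\chi,\mu>0$, $\epsilon(v)=\frac12(\nabla v+\nabla v^T)$), $a(w,v)=\int_\Omega\sigma(w):\epsilon(v)\,dx$, $L(v)=\int_\Omega f\cdot v\,dx+\int_{\Gamma_N}g\cdot v\,ds$ with $f\in[L^2(\Omega)]^2$, $g\in[L^2(\Gamma_N)]^2$, and $V=\{v\in[H^1(\Omega)]^2: v=0\text{ on }\Gamma_D\}$. Let $\mathcal{T}_h$ be a regular triangulation of $\Omega$ (each of $\Gamma_D,\Gamma_N,\Gamma_C$ a union of mesh edges). $\mathcal{V}_h$, $\mathcal{M}_h$ are the sets of vertices and edge midpoints; $\mathcal{V}_h^C$ = vertices in $\overline{\Gamma_C}$, $\mathcal{M}_h^C$ = midpoints of edges on $\Gamma_C$; $\mathcal{V}_h^D,\mathcal{M}_h^D$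 analogously for $\Gamma_D$; $\mathcal{V}_h^o=\mathcal{V}_h\setminus\mathcal{V}_h^D$, $\mathcal{M}_h^o=\mathcal{M}_h\setminus\mathcal{M}_h^D$. $V^h=\{v\in[C(\overline\Omega)]^2: v|_T\in[P_2(T)]^2,\ v=0\text{ on }\Gamma_D\}$ with scalar quadratic Lagrange basis $\psi_z$, $z\in\mathcal{V}_h^o\cup\mathcal{M}_h^o$. $\mathcal{K}^h=\{v^h\in V^h: v^h_1(z)\le0\ \forall z\in\mathcal{V}_h^C\cup\mathcal{M}_h^C\}$; $u^h\in\mathcal{K}^h$ solves $a(u^h,v^h-u^h)\ge L(v^h-u^h)$ for all $v^h\in\mathcal{K}^h$. Split each edge of $\Gamma_C$ at its midpoint; $Q^h$ = continuous $\mathbb{R}^2$-valued functions on $\overline{\Gamma_C}$ affine on each half-edge, with scalar nodal basis $\phi_z$, $z\in\mathcal{V}_h^C\cup\mathcal{M}_h^C$. For a node $z$, $\omega_z$ = union of elements sharing $z$, $\gamma_{z,C}=\partial\omega_z\cap\Gamma_C$. $\pi_h v=\sum_{z\in\mathcal{V}_h^C\cup\mathcal{M}_h^C}\sum_{i=1}^2v_i(z)\psi_ze_i$ for $v\in Q^h$; $\langle w,v\rangle_h=\sum_{z}w(z)\cdot v(z)\int_{\gamma_{z,C}}\phi_z\,ds$; $\lambda^h=(\lambda^h_1,\lambda^h_2)\in Q^h$ is defined by $\langle\lambda^h,v^h\rangle_h=L(\pi_hv^h)-a(u^h,\pi_hv^h)$ for all $v^h\in Q^h$. Set $s^i_p=\lambda^h_i(p)$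 for $p\in\mathcal{V}_h^C\cup\mathcal{M}_h^C$, $i=1,2$, and define the quasi discrete contact force density $\tilde\lambda^h\in V^*$ by $\langle\tilde\lambda^h,v\rangle_{-1,1}=\sum_{i=1}^2\langle\tilde\lambda^h_i,v_i\rangle_{-1,1}$ with $\langle\tilde\lambda^h_i,w\rangle_{-1,1}=\int_{\Gamma_C}\big(\sum_{z\in\mathcal{V}_h^C\cup\mathcal{M}_h^C}s^i_z\phi_z\big)w\,ds$. *)

theory Defs
  imports "HOL-Analysis.Analysis"
begin

type_synonym pt = "real \<times> real"

definition e :: "nat \<Rightarrow> pt" where
  "e i = (if i = 1 then (1, 0) else (0, 1))"

definition comp :: "nat \<Rightarrow> pt \<Rightarrow> real" where
  "comp i v = (if i = 1 then fst v else snd v)"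

definition lipschitz_domain :: "pt set \<Rightarrow> bool" where
  "lipschitz_domain \<Omega> \<longleftrightarrow> open \<Omega> \<and> bounded \<Omega> \<and> connected \<Omega> \<and>
     (\<forall>x\<in>frontier \<Omega>. \<exists>r>0. \<exists>Q C (g::real \<Rightarrow> real).
        orthogonal_transformation Q \<and> lipschitz_on C UNIV g \<and>
        \<Omega> \<inter> ball x r = {y \<in> ball x r. snd (Q (y - x)) < g (fst (Q (y - x)))})"

(* A mesh is a finite set of vertex triples K; the element is convex hull K. *)
definition triangulation :: "pt set set \<Rightarrow> bool" where
  "triangulation Tr \<longleftrightarrow> finite Tr \<and> (\<forall>K\<in>Tr. card K = 3 \<and> \<not> collinear K) \<and>
     (\<forall>K\<in>Tr. \<forall>K'\<in>Tr. K \<noteq> K' \<longrightarrow> convex hull K \<inter> convex hull K' = convex hull (K \<inter> K'))"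

definition edge_pairs :: "pt set set \<Rightarrow> (pt \<times> pt) set" where
  "edge_pairs Tr = {(a, b). \<exists>K\<in>Tr. a \<in> K \<and> b \<in> K \<and> a \<noteq> b}"

definition edges_on :: "pt set set \<Rightarrow> pt set \<Rightarrow> (pt \<times> pt) set" where
  "edges_on Tr \<Gamma> = {(a, b) \<in> edge_pairs Tr. closed_segment a b \<subseteq> closure \<Gamma>}"

definition union_of_edges :: "pt set set \<Rightarrow> pt set \<Rightarrow> bool" where
  "union_of_edges Tr \<Gamma> \<longleftrightarrow> closure \<Gamma> = (\<Union>(a, b)\<in>edges_on Tr \<Gamma>. closed_segment a b)"

definition seg_integral :: "pt \<Rightarrow> pt \<Rightarrow> (pt \<Rightarrow> real) \<Rightarrow> real" where
  "seg_integral a b F = norm (b - a) * integral {0..1} (\<lambda>t. F (a + t *\<^sub>R (b - a)))"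

(* arc-length integral  \<integral>_S F ds  over a set S contained in the polygonal boundary part
   closure \<Gamma> (a union of mesh edges); each edge is counted in both orientations, hence 1/2 *)
definition bint :: "pt set set \<Rightarrow> pt set \<Rightarrow> pt set \<Rightarrow> (pt \<Rightarrow> real) \<Rightarrow> real" where
  "bint Tr \<Gamma> S F = (1/2) * (\<Sum>(a, b)\<in>edges_on Tr \<Gamma>. seg_integral a b (\<lambda>x. indicator S x * F x))"

definition verts :: "pt set set \<Rightarrow> pt set" where
  "verts Tr = \<Union>Tr"

definition mids :: "pt set set \<Rightarrow> pt set" where
  "mids Tr = {midpoint a b | a b. (a, b) \<in> edge_pairs Tr}"

definition verts_on :: "pt set set \<Rightarrow> pt set \<Rightarrow> pt set" where
  "verts_on Tr \<Gamma> = {z \<in> verts Tr. z \<in> closure \<Gamma>}"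

definition mids_on :: "pt set set \<Rightarrow> pt set \<Rightarrow> pt set" where
  "mids_on Tr \<Gamma> = {midpoint a b | a b. (a, b) \<in> edges_on Tr \<Gamma>}"

definition contact_nodes :: "pt set set \<Rightarrow> pt set \<Rightarrow> pt set" where
  "contact_nodes Tr \<Gamma>C = verts_on Tr \<Gamma>C \<union> mids_on Tr \<Gamma>C"

definition free_nodes :: "pt set set \<Rightarrow> pt set \<Rightarrow> pt set" where
  "free_nodes Tr \<Gamma>D = (verts Tr - verts_on Tr \<Gamma>D) \<union> (mids Tr - mids_on Tr \<Gamma>D)"

definition contact_setting :: "pt set \<Rightarrow> pt set \<Rightarrow> pt set \<Rightarrow> pt set \<Rightarrow> pt set set \<Rightarrow> bool" where
  "contact_setting \<Omega> \<Gamma>D \<Gamma>N \<Gamma>C Tr \<longleftrightarrow>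
     lipschitz_domain \<Omega> \<and> triangulation Tr \<and>
     closure \<Omega> = (\<Union>K\<in>Tr. convex hull K) \<and>
     openin (top_of_set (frontier \<Omega>)) \<Gamma>D \<and>
     openin (top_of_set (frontier \<Omega>)) \<Gamma>N \<and>
     openin (top_of_set (frontier \<Omega>)) \<Gamma>C \<and>
     \<Gamma>D \<inter> \<Gamma>N = {} \<and> \<Gamma>D \<inter> \<Gamma>C = {} \<and> \<Gamma>N \<inter> \<Gamma>C = {} \<and>
     frontier \<Omega> = closure \<Gamma>D \<union> closure \<Gamma>N \<union> closure \<Gamma>C \<and>
     bint Tr \<Gamma>D \<Gamma>D (\<lambda>_. 1) > 0 \<and>
     closure \<Gamma>C \<subseteq> frontier \<Omega> - closure \<Gamma>D \<and>
     (\<forall>x\<in>\<Gamma>C. \<exists>\<epsilon>>0. \<Omega> \<inter> ball x \<epsilon> = {y \<in> ball x \<epsilon>. fst y < fst x}) \<and>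
     union_of_edges Tr \<Gamma>D \<and> union_of_edges Tr \<Gamma>N \<and> union_of_edges Tr \<Gamma>C"

definition P2_on :: "pt set \<Rightarrow> (pt \<Rightarrow> real) \<Rightarrow> bool" where
  "P2_on T h \<longleftrightarrow> (\<exists>c :: nat \<Rightarrow> real. \<forall>x\<in>T.
     h x = c 0 + c 1 * fst x + c 2 * snd x + c 3 * (fst x)\<^sup>2 + c 4 * (fst x * snd x) + c 5 * (snd x)\<^sup>2)"

definition Vh_space :: "pt set \<Rightarrow> pt set \<Rightarrow> pt set set \<Rightarrow> (pt \<Rightarrow> pt) set" where
  "Vh_space \<Omega> \<Gamma>D Tr = {v. continuous_on (closure \<Omega>) v \<and>
     (\<forall>K\<in>Tr. P2_on (convex hull K) (\<lambda>x. fst (v x)) \<and> P2_on (convex hull K) (\<lambda>x. snd (v x))) \<and>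
     (\<forall>x\<in>\<Gamma>D. v x = 0)}"

definition P2_basis :: "pt set \<Rightarrow> pt set \<Rightarrow> pt set set \<Rightarrow> (pt \<Rightarrow> pt \<Rightarrow> real) \<Rightarrow> bool" where
  "P2_basis \<Omega> \<Gamma>D Tr \<psi> \<longleftrightarrow> (\<forall>z\<in>free_nodes Tr \<Gamma>D.
     continuous_on (closure \<Omega>) (\<psi> z) \<and> (\<forall>K\<in>Tr. P2_on (convex hull K) (\<psi> z)) \<and>
     (\<forall>x\<in>\<Gamma>D. \<psi> z x = 0) \<and>
     (\<forall>z'\<in>free_nodes Tr \<Gamma>D. \<psi> z z' = (if z' = z then 1 else 0)))"

definition Kh_space :: "pt set \<Rightarrow> pt set \<Rightarrow> pt set \<Rightarrow> pt set set \<Rightarrow> (pt \<Rightarrow> pt) set" where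
  "Kh_space \<Omega> \<Gamma>D \<Gamma>C Tr = {v \<in> Vh_space \<Omega> \<Gamma>D Tr. \<forall>z\<in>contact_nodes Tr \<Gamma>C. fst (v z) \<le> 0}"

(* classical partial derivative \<partial>_j h (x); set to 0 where it does not exist (a null set
   for the piecewise polynomial functions it is applied to) *)
definition pd :: "nat \<Rightarrow> (pt \<Rightarrow> real) \<Rightarrow> pt \<Rightarrow> real" where
  "pd j h x = (if (\<lambda>t. h (x + t *\<^sub>R e j)) differentiable (at 0)
               then deriv (\<lambda>t. h (x + t *\<^sub>R e j)) 0 else 0)"

definition eps :: "(pt \<Rightarrow> pt) \<Rightarrow> nat \<Rightarrow> nat \<Rightarrow> pt \<Rightarrow> real" where
  "eps v i j x = (pd j (\<lambda>y. comp i (v y)) x + pd i (\<lambda>y. comp j (v y)) x) / 2"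

definition stress :: "real \<Rightarrow> real \<Rightarrow> (pt \<Rightarrow> pt) \<Rightarrow> nat \<Rightarrow> nat \<Rightarrow> pt \<Rightarrow> real" where
  "stress chi \<mu> v i j x = chi * (eps v 1 1 x + eps v 2 2 x) * (if i = j then 1 else 0) + 2 * \<mu> * eps v i j x"

definition a_form :: "real \<Rightarrow> real \<Rightarrow> pt set \<Rightarrow> (pt \<Rightarrow> pt) \<Rightarrow> (pt \<Rightarrow> pt) \<Rightarrow> real" where
  "a_form chi \<mu> \<Omega> w v = integral \<Omega> (\<lambda>x. \<Sum>i\<in>{1,2}. \<Sum>j\<in>{1,2}. stress chi \<mu> w i j x * eps v i j x)"

definition L_form :: "pt set \<Rightarrow> pt set set \<Rightarrow> pt set \<Rightarrow> (pt \<Rightarrow> pt) \<Rightarrow> (pt \<Rightarrow> pt) \<Rightarrow> (pt \<Rightarrow> pt) \<Rightarrow> real" where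
  "L_form \<Omega> Tr \<Gamma>N f g v = integral \<Omega> (\<lambda>x. f x \<bullet> v x) + bint Tr \<Gamma>N \<Gamma>N (\<lambda>x. g x \<bullet> v x)"

definition L2_dom :: "pt set \<Rightarrow> (pt \<Rightarrow> pt) \<Rightarrow> bool" where
  "L2_dom \<Omega> f \<longleftrightarrow> f measurable_on \<Omega> \<and> (\<lambda>x. (norm (f x))\<^sup>2) integrable_on \<Omega>"

definition L2_bd :: "pt set set \<Rightarrow> pt set \<Rightarrow> (pt \<Rightarrow> pt) \<Rightarrow> bool" where
  "L2_bd Tr \<Gamma>N g \<longleftrightarrow> (\<forall>(a, b)\<in>edges_on Tr \<Gamma>N.
     (\<lambda>t. g (a + t *\<^sub>R (b - a))) measurable_on {0..1} \<and>
     (\<lambda>t. (norm (g (a + t *\<^sub>R (b - a))))\<^sup>2) integrable_on {0..1})"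

definition affine_on_seg :: "pt \<Rightarrow> pt \<Rightarrow> (pt \<Rightarrow> 'b::real_vector) \<Rightarrow> bool" where
  "affine_on_seg p r q \<longleftrightarrow> (\<forall>t\<in>{0..1}. q (p + t *\<^sub>R (r - p)) = (1 - t) *\<^sub>R q p + t *\<^sub>R q r)"

definition Qh_space :: "pt set set \<Rightarrow> pt set \<Rightarrow> (pt \<Rightarrow> 'b::real_normed_vector) set" where
  "Qh_space Tr \<Gamma>C = {q. continuous_on (closure \<Gamma>C) q \<and>
     (\<forall>(a, b)\<in>edges_on Tr \<Gamma>C. affine_on_seg a (midpoint a b) q \<and> affine_on_seg (midpoint a b) b q)}"

definition Q1_basis :: "pt set set \<Rightarrow> pt set \<Rightarrow> (pt \<Rightarrow> pt \<Rightarrow> real) \<Rightarrow> bool" where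
  "Q1_basis Tr \<Gamma>C \<phi> \<longleftrightarrow> (\<forall>z\<in>contact_nodes Tr \<Gamma>C. \<phi> z \<in> Qh_space Tr \<Gamma>C \<and>
     (\<forall>z'\<in>contact_nodes Tr \<Gamma>C. \<phi> z z' = (if z' = z then 1 else 0)))"

definition pi_h :: "pt set set \<Rightarrow> pt set \<Rightarrow> (pt \<Rightarrow> pt \<Rightarrow> real) \<Rightarrow> (pt \<Rightarrow> pt) \<Rightarrow> (pt \<Rightarrow> pt)" where
  "pi_h Tr \<Gamma>C \<psi> v = (\<lambda>x. \<Sum>z\<in>contact_nodes Tr \<Gamma>C. \<Sum>i\<in>{1,2}. (comp i (v z) * \<psi> z x) *\<^sub>R e i)"

definition patch :: "pt set set \<Rightarrow> pt \<Rightarrow> pt set" where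
  "patch Tr z = \<Union>{convex hull K | K. K \<in> Tr \<and> z \<in> convex hull K}"

definition gammaC :: "pt set set \<Rightarrow> pt set \<Rightarrow> pt \<Rightarrow> pt set" where
  "gammaC Tr \<Gamma>C z = frontier (patch Tr z) \<inter> \<Gamma>C"

definition disc_ip :: "pt set set \<Rightarrow> pt set \<Rightarrow> (pt \<Rightarrow> pt \<Rightarrow> real) \<Rightarrow> (pt \<Rightarrow> pt) \<Rightarrow> (pt \<Rightarrow> pt) \<Rightarrow> real" where
  "disc_ip Tr \<Gamma>C \<phi> w v = (\<Sum>z\<in>contact_nodes Tr \<Gamma>C. (w z \<bullet> v z) * bint Tr \<Gamma>C (gammaC Tr \<Gamma>C z) (\<phi> z))"

definition lam_tilde_i :: "pt set set \<Rightarrow> pt set \<Rightarrow> (pt \<Rightarrow> pt \<Rightarrow> real) \<Rightarrow> (pt \<Rightarrow> pt) \<Rightarrow> nat \<Rightarrow> (pt \<Rightarrow> real) \<Rightarrow> real" where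
  "lam_tilde_i Tr \<Gamma>C \<phi> lam i w =
     bint Tr \<Gamma>C \<Gamma>C (\<lambda>x. (\<Sum>z\<in>contact_nodes Tr \<Gamma>C. comp i (lam z) * \<phi> z x) * w x)"

definition lam_tilde :: "pt set set \<Rightarrow> pt set \<Rightarrow> (pt \<Rightarrow> pt \<Rightarrow> real) \<Rightarrow> (pt \<Rightarrow> pt) \<Rightarrow> (pt \<Rightarrow> pt) \<Rightarrow> real" where
  "lam_tilde Tr \<Gamma>C \<phi> lam v = (\<Sum>i\<in>{1,2}. lam_tilde_i Tr \<Gamma>C \<phi> lam i (\<lambda>x. comp i (v x)))"

end

theory Submission
  imports Defs
begin

(* Test the defining relation of lam with the nodal function w = c phi_z e_i of Q^h.  Its lift
   pi_h w is c psi_z e_i, and u + c psi_z e_i stays in K^h when i = 2 or c <= 0, because psi_z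
   takes the values 0 and 1 at the contact nodes.  The variational inequality therefore gives
   c lam_i(z) B_z <= 0, where B_z is the integral of phi_z over gamma_{z,C}.  This weight is
   positive: Omega lies on one side of Gamma_C, so the points of Gamma_C in an element containing z
   lie on the boundary of the patch omega_z, and phi_z >= 1/2 on a piece of an edge through z that
   Gamma_C, being relatively open in the boundary, covers on a nondegenerate interval.  Hence
   lam_2 vanishes and lam_1 is nonnegative at every contact node; as phi_z >= 0 on Gamma_C, the
   density sum_z lam_1(z) phi_z is nonnegative. *)

section \<open>Conforming triangulations\<close>

lemma mem_convex_hull_Int_affine_independent:
  fixes K :: "'a::euclidean_space set"
  assumes "\<not> affine_dependent K" "A \<subseteq> K" "S \<subseteq> K"
    and "p \<in> convex hull A" "p \<in> convex hull S"
  shows "p \<in> convex hull (A \<inter> S)"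
proof -
  have "\<not> affine_dependent (A \<union> S)"
    using assms(1-3) affine_dependent_subset by (metis Un_subset_iff)
  then show ?thesis using assms(4,5) convex_hull_Int by blast
qed

lemma vertex_in_convex_hull_subset:
  fixes K :: "'a::euclidean_space set"
  assumes "\<not> affine_dependent K" "x \<in> K" "S \<subseteq> K" "x \<in> convex hull S"
  shows "x \<in> S"
proof -
  have "x \<in> convex hull ({x} \<inter> S)"
    using mem_convex_hull_Int_affine_independent[of K "{x}" S x] assms by simp
  then show ?thesis by (cases "x \<in> S") auto
qed

lemma open_segment_in_convex_hull_subset:
  fixes K :: "'a::euclidean_space set"
  assumes "\<not> affine_dependent K" "a \<in> K" "b \<in> K" "S \<subseteq> K"
    and p: "p \<in> open_segment a b" "p \<in> convex hull S"
  shows "a \<in> S \<and> b \<in> S"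
proof (rule ccontr)
  have "p \<in> convex hull {a, b}"
    using p(1) by (metis open_closed_segment segment_convex_hull)
  then have "p \<in> convex hull ({a, b} \<inter> S)"
    using mem_convex_hull_Int_affine_independent[of K "{a, b}" S p] assms by simp
  moreover assume "\<not> (a \<in> S \<and> b \<in> S)"
  then have "{a, b} \<inter> S \<subseteq> {a} \<or> {a, b} \<inter> S \<subseteq> {b}" by auto
  ultimately have "p = a \<or> p = b"
    using hull_mono[of "{a, b} \<inter> S" "{a}" convex] hull_mono[of "{a, b} \<inter> S" "{b}" convex] by auto
  then show False using p(1) by (auto simp: open_segment_def)
qed

lemma triangulation_affine_independent:
  assumes "triangulation Tr" "K \<in> Tr"
  shows "\<not> affine_dependent K"
proof -
  have "card K = 3" "\<not> collinear K" using assms unfolding triangulation_def by blast+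
  then obtain a b c where "K = {a, b, c}" "a \<noteq> b" "a \<noteq> c" "b \<noteq> c"
    unfolding card_3_iff by blast
  then show ?thesis using \<open>\<not> collinear K\<close> collinear_3_eq_affine_dependent by auto
qed

lemma triangulation_convex_hull_Int:
  assumes "triangulation Tr" "K \<in> Tr" "K' \<in> Tr" "p \<in> convex hull K" "p \<in> convex hull K'"
  shows "p \<in> convex hull (K \<inter> K')"
proof (cases "K = K'")
  case False
  then have "convex hull K \<inter> convex hull K' = convex hull (K \<inter> K')"
    using assms(1-3) unfolding triangulation_def by blast
  then show ?thesis using assms(4,5) by blast
qed (use assms(4) in simp)

lemma closed_segment_subset_convex_hull:
  "a \<in> K \<Longrightarrow> b \<in> K \<Longrightarrow> closed_segment a b \<subseteq> convex hull K"
  by (simp add: segment_convex_hull hull_mono)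

lemma closed_segment_param:
  assumes "0 \<le> s" "s \<le> 1"
  shows "a + s *\<^sub>R (b - a) \<in> closed_segment a b"
proof -
  have "a + s *\<^sub>R (b - a) = (1 - s) *\<^sub>R a + s *\<^sub>R b" by (simp add: algebra_simps)
  then show ?thesis using assms unfolding in_segment by blast
qed

lemma open_segment_param:
  assumes "a \<noteq> b" "0 < s" "s < 1"
  shows "a + s *\<^sub>R (b - a) \<in> open_segment a b"
proof -
  have "a + s *\<^sub>R (b - a) = (1 - s) *\<^sub>R a + s *\<^sub>R b" by (simp add: algebra_simps)
  then show ?thesis using assms unfolding in_segment by blast
qed

lemma edge_pairs_open_segment_unique:
  assumes T: "triangulation Tr" and "(a, b) \<in> edge_pairs Tr" "(c, d) \<in> edge_pairs Tr"
    and p: "p \<in> open_segment a b" "p \<in> closed_segment c d"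
  shows "{c, d} = {a, b}"
proof -
  obtain K where K: "K \<in> Tr" "a \<in> K" "b \<in> K" "a \<noteq> b"
    using assms(2) by (auto simp: edge_pairs_def)
  obtain K' where K': "K' \<in> Tr" "c \<in> K'" "d \<in> K'" "c \<noteq> d"
    using assms(3) by (auto simp: edge_pairs_def)
  have "p \<in> convex hull (K \<inter> K')"
    using triangulation_convex_hull_Int[OF T K(1) K'(1)] p open_closed_segment
      closed_segment_subset_convex_hull K K' by blast
  then have "a \<in> K'" "b \<in> K'"
    using open_segment_in_convex_hull_subset[OF triangulation_affine_independent[OF T K(1)] K(2,3) _ p(1)]
    by auto
  then have "a \<in> {c, d} \<and> b \<in> {c, d}"
    using open_segment_in_convex_hull_subset[OF triangulation_affine_independent[OF T K'(1)] _ _ _ p(1), of "{c, d}"]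
      K' p(2) by (simp add: segment_convex_hull)
  then show ?thesis using K(4) K'(4) by auto
qed

lemma vertex_on_edge:
  assumes T: "triangulation Tr" and "(a, b) \<in> edge_pairs Tr" "K' \<in> Tr" "z \<in> K'"
    and z: "z \<in> closed_segment a b"
  shows "z = a \<or> z = b"
proof -
  obtain K where K: "K \<in> Tr" "a \<in> K" "b \<in> K" using assms(2) by (auto simp: edge_pairs_def)
  have "z \<in> convex hull (K \<inter> K')"
    using triangulation_convex_hull_Int[OF T K(1) assms(3)] z closed_segment_subset_convex_hull[OF K(2,3)]
      hull_inc[OF assms(4)] by blast
  then have "z \<in> K"
    using vertex_in_convex_hull_subset[OF triangulation_affine_independent[OF T assms(3)] assms(4)] by blast
  then have "z \<in> {a, b}"
    using vertex_in_convex_hull_subset[OF triangulation_affine_independent[OF T K(1)], of z "{a, b}"] K z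
    by (simp add: segment_convex_hull)
  then show ?thesis by auto
qed

section \<open>Nodes and the multiplier space\<close>

lemma finite_verts:
  assumes "triangulation Tr"
  shows "finite (verts Tr)"
proof -
  have "finite Tr" "\<And>K. K \<in> Tr \<Longrightarrow> card K = 3"
    using assms unfolding triangulation_def by blast+
  then show ?thesis unfolding verts_def by (metis card.infinite finite_Union zero_neq_numeral)
qed

lemma finite_edge_pairs:
  assumes "triangulation Tr"
  shows "finite (edge_pairs Tr)"
proof -
  have "edge_pairs Tr \<subseteq> verts Tr \<times> verts Tr" by (auto simp: edge_pairs_def verts_def)
  then show ?thesis using finite_verts[OF assms] by (meson finite_SigmaI finite_subset)
qed

lemma finite_edges_on: "triangulation Tr \<Longrightarrow> finite (edges_on Tr G)"
  unfolding edges_on_def using finite_edge_pairs by (rule finite_subset[rotated]) auto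

lemma mids_on_eq_image: "mids_on Tr G = (\<lambda>(a, b). midpoint a b) ` edges_on Tr G"
  unfolding mids_on_def by force

lemma finite_contact_nodes:
  assumes "triangulation Tr"
  shows "finite (contact_nodes Tr G)"
proof -
  have "finite (verts_on Tr G)"
    using finite_verts[OF assms] by (rule finite_subset[rotated]) (auto simp: verts_on_def)
  then show ?thesis
    using finite_edges_on[OF assms] by (simp add: contact_nodes_def mids_on_eq_image)
qed

lemma edges_on_commute: "(a, b) \<in> edges_on Tr G \<Longrightarrow> (b, a) \<in> edges_on Tr G"
  unfolding edges_on_def edge_pairs_def by (simp add: closed_segment_commute) blast

lemma edges_on_contact_nodes:
  assumes "(a, b) \<in> edges_on Tr G"
  shows "a \<in> contact_nodes Tr G" "b \<in> contact_nodes Tr G" "midpoint a b \<in> contact_nodes Tr G"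
proof -
  obtain K where "K \<in> Tr" "a \<in> K" "b \<in> K" "closed_segment a b \<subseteq> closure G"
    using assms by (auto simp: edges_on_def edge_pairs_def)
  then show "a \<in> contact_nodes Tr G" "b \<in> contact_nodes Tr G"
    by (auto simp: contact_nodes_def verts_on_def verts_def)
  show "midpoint a b \<in> contact_nodes Tr G"
    using assms unfolding contact_nodes_def mids_on_def by blast
qed

lemma mids_on_subset_closure: "mids_on Tr G \<subseteq> closure G"
  by (auto simp: mids_on_def edges_on_def)

lemma contact_nodes_subset_free_nodes:
  assumes "closure \<Gamma>C \<inter> closure \<Gamma>D = {}"
  shows "contact_nodes Tr \<Gamma>C \<subseteq> free_nodes Tr \<Gamma>D"
proof
  fix z assume z: "z \<in> contact_nodes Tr \<Gamma>C"
  have "z \<in> closure \<Gamma>C" "z \<in> verts Tr \<union> mids Tr"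
    using z mids_on_subset_closure
    by (auto simp: contact_nodes_def verts_on_def mids_on_def mids_def edges_on_def)
  moreover have "verts_on Tr \<Gamma>D \<union> mids_on Tr \<Gamma>D \<subseteq> closure \<Gamma>D"
    using mids_on_subset_closure by (auto simp: verts_on_def)
  ultimately show "z \<in> free_nodes Tr \<Gamma>D"
    using assms by (auto simp: free_nodes_def)
qed

lemma affine_on_seg_first_half:
  assumes "affine_on_seg a (midpoint a b) q" "0 \<le> s" "s \<le> 1/2"
  shows "q (a + s *\<^sub>R (b - a)) = (1 - 2 * s) *\<^sub>R q a + (2 * s) *\<^sub>R q (midpoint a b)"
proof -
  have "a + s *\<^sub>R (b - a) = a + (2 * s) *\<^sub>R (midpoint a b - a)"
    by (cases a; cases b) (auto simp: midpoint_def field_simps)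
  moreover have "2 * s \<in> {0..1}" using assms(2,3) by simp
  ultimately show ?thesis
    using assms(1) unfolding affine_on_seg_def by metis
qed

lemma affine_on_seg_second_half:
  assumes "affine_on_seg (midpoint a b) b q" "1/2 \<le> s" "s \<le> 1"
  shows "q (a + s *\<^sub>R (b - a)) = (2 - 2 * s) *\<^sub>R q (midpoint a b) + (2 * s - 1) *\<^sub>R q b"
proof -
  have "a + s *\<^sub>R (b - a) = midpoint a b + (2 * s - 1) *\<^sub>R (b - midpoint a b)"
    by (cases a; cases b) (auto simp: midpoint_def field_simps)
  moreover have "2 * s - 1 \<in> {0..1}" using assms(2,3) by simp
  moreover have "1 - (2 * s - 1) = 2 - 2 * s" by simp
  ultimately show ?thesis
    using assms(1) unfolding affine_on_seg_def by metis
qed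

lemma Qh_space_nonneg_on_edge:
  fixes q :: "pt \<Rightarrow> real"
  assumes "q \<in> Qh_space Tr G" "\<And>z. z \<in> contact_nodes Tr G \<Longrightarrow> 0 \<le> q z"
    and ab: "(a, b) \<in> edges_on Tr G" and "0 \<le> t" "t \<le> 1"
  shows "0 \<le> q (a + t *\<^sub>R (b - a))"
proof -
  have "affine_on_seg a (midpoint a b) q" "affine_on_seg (midpoint a b) b q"
    using assms(1) ab by (auto simp: Qh_space_def)
  moreover have "0 \<le> q a" "0 \<le> q b" "0 \<le> q (midpoint a b)"
    using assms(2) edges_on_contact_nodes[OF ab] by auto
  ultimately show ?thesis
    using affine_on_seg_first_half[of a b q t] affine_on_seg_second_half[of a b q t] assms(4,5)
    by (cases "t \<le> 1/2") auto
qed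

lemma Q1_basis_nonneg_on_edge:
  assumes "Q1_basis Tr G \<phi>" "z \<in> contact_nodes Tr G" "(a, b) \<in> edges_on Tr G" "0 \<le> t" "t \<le> 1"
  shows "0 \<le> \<phi> z (a + t *\<^sub>R (b - a))"
  using assms by (intro Qh_space_nonneg_on_edge[of "\<phi> z" Tr G]) (auto simp: Q1_basis_def)

section \<open>Geometry of the contact boundary\<close>

lemma
  assumes "contact_setting \<Omega> \<Gamma>D \<Gamma>N \<Gamma>C Tr"
  shows contact_setting_triangulation: "triangulation Tr"
    and contact_setting_closure_domain: "closure \<Omega> = (\<Union>K\<in>Tr. convex hull K)"
    and contact_setting_GammaC_open: "\<exists>U. open U \<and> \<Gamma>C = frontier \<Omega> \<inter> U"
    and contact_setting_closure_GammaC: "closure \<Gamma>C \<subseteq> frontier \<Omega>"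
    and contact_setting_closures_disjoint: "closure \<Gamma>C \<inter> closure \<Gamma>D = {}"
    and contact_setting_GammaC_edges: "union_of_edges Tr \<Gamma>C"
    and contact_setting_normal: "\<forall>x\<in>\<Gamma>C. \<exists>\<epsilon>>0. \<Omega> \<inter> ball x \<epsilon> = {y \<in> ball x \<epsilon>. fst y < fst x}"
proof -
  have "openin (top_of_set (frontier \<Omega>)) \<Gamma>C"
    using assms unfolding contact_setting_def by blast
  then show "\<exists>U. open U \<and> \<Gamma>C = frontier \<Omega> \<inter> U" by (simp add: openin_open)
qed (use assms in \<open>auto simp: contact_setting_def\<close>)

lemma half_plane_point_not_interior:
  fixes \<Omega> S :: "pt set"
  assumes "\<epsilon> > 0" and \<Omega>: "\<Omega> \<inter> ball x \<epsilon> = {y \<in> ball x \<epsilon>. fst y < fst x}"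
    and S: "S \<subseteq> closure \<Omega>"
  shows "x \<notin> interior S"
proof
  assume "x \<in> interior S"
  then obtain r where r: "r > 0" "ball x r \<subseteq> S" using mem_interior by blast
  define \<rho> where "\<rho> = min r \<epsilon> / 2"
  define y where "y = x + (\<rho>, 0)"
  have \<rho>: "\<rho> > 0" "\<rho> < r" "2 * \<rho> \<le> \<epsilon>" using r(1) \<open>\<epsilon> > 0\<close> by (auto simp: \<rho>_def)
  have dy: "dist x y = \<rho>" using \<rho>(1) by (simp add: y_def dist_norm norm_Pair)
  then have "y \<in> closure \<Omega>" using r(2) S \<rho>(2) by auto
  then obtain w where w: "w \<in> \<Omega>" "dist w y < \<rho>"
    using closure_approachable \<rho>(1) by blast
  have "dist x w < \<epsilon>"
    using dist_triangle[of x w y] dy \<rho>(3) w(2) by (simp add: dist_commute)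
  then have "w \<in> \<Omega> \<inter> ball x \<epsilon>" using w(1) by simp
  then have "fst w < fst x" unfolding \<Omega> by blast
  moreover have "dist (fst w) (fst y) < \<rho>" using dist_fst_le[of w y] w(2) by simp
  ultimately show False by (simp add: y_def dist_real_def)
qed

lemma GammaC_mem_gammaC:
  assumes set: "contact_setting \<Omega> \<Gamma>D \<Gamma>N \<Gamma>C Tr" and x: "x \<in> \<Gamma>C"
    and K: "K \<in> Tr" "x \<in> convex hull K" "z \<in> convex hull K"
  shows "x \<in> gammaC Tr \<Gamma>C z"
proof -
  have "patch Tr z \<subseteq> closure \<Omega>"
    using contact_setting_closure_domain[OF set] by (auto simp: patch_def)
  moreover obtain \<epsilon> where "\<epsilon> > 0" "\<Omega> \<inter> ball x \<epsilon> = {y \<in> ball x \<epsilon>. fst y < fst x}"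
    using contact_setting_normal[OF set] x by blast
  ultimately have "x \<notin> interior (patch Tr z)"
    using half_plane_point_not_interior by blast
  moreover have "x \<in> patch Tr z" using K by (auto simp: patch_def)
  ultimately show ?thesis using x by (simp add: gammaC_def frontier_def closure_subset[THEN subsetD])
qed

lemma closure_edges_locally_segment:
  assumes T: "triangulation Tr" and G: "union_of_edges Tr G"
    and ab: "(a, b) \<in> edges_on Tr G" and p: "p \<in> open_segment a b"
  shows "\<exists>r>0. closure G \<inter> ball p r \<subseteq> closed_segment a b"
proof -
  define U where "U = (\<Union>(c, d)\<in>{(c, d) \<in> edges_on Tr G. p \<notin> closed_segment c d}. closed_segment c d)"
  have "finite {(c, d) \<in> edges_on Tr G. p \<notin> closed_segment c d}"
    using finite_edges_on[OF T] by (rule finite_subset[rotated]) auto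
  then have "closed U" unfolding U_def by (intro closed_UN) auto
  moreover have "p \<notin> U" by (auto simp: U_def)
  ultimately obtain r where r: "r > 0" "ball p r \<subseteq> - U"
    using open_contains_ball[of "- U"] by blast
  have "q \<in> closed_segment a b" if q: "q \<in> closure G" "q \<in> ball p r" for q
  proof -
    obtain c d where cd: "(c, d) \<in> edges_on Tr G" "q \<in> closed_segment c d"
      using q(1) G unfolding union_of_edges_def by auto
    have "p \<in> closed_segment c d"
    proof (rule ccontr)
      assume "p \<notin> closed_segment c d"
      then have "q \<in> U" unfolding U_def using cd by (intro UN_I[of "(c, d)"]) auto
      then show False using q(2) r(2) by blast
    qed
    then have "{c, d} = {a, b}"
      using edge_pairs_open_segment_unique[OF T _ _ p] ab cd(1) by (auto simp: edges_on_def)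
    then show ?thesis using cd(2) by (auto simp: doubleton_eq_iff closed_segment_commute)
  qed
  then show ?thesis using r(1) by blast
qed

lemma edge_contains_GammaC_interval:
  assumes set: "contact_setting \<Omega> \<Gamma>D \<Gamma>N \<Gamma>C Tr" and ab: "(a, b) \<in> edges_on Tr \<Gamma>C"
    and "0 < \<alpha>" "\<alpha> < \<beta>" "\<beta> < 1"
  shows "\<exists>t1 t2. \<alpha> < t1 \<and> t1 < t2 \<and> t2 < \<beta> \<and> (\<forall>s\<in>{t1..t2}. a + s *\<^sub>R (b - a) \<in> \<Gamma>C)"
proof -
  define \<gamma> where "\<gamma> s = a + s *\<^sub>R (b - a)" for s
  define m where "m = (\<alpha> + \<beta>) / 2"
  define \<delta> where "\<delta> = (\<beta> - \<alpha>) / 2"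
  have seg: "closed_segment a b \<subseteq> closure \<Gamma>C" and "a \<noteq> b"
    using ab by (auto simp: edges_on_def edge_pairs_def)
  then have nba: "norm (b - a) > 0" by simp
  have \<gamma>_seg: "\<gamma> s \<in> closed_segment a b" if "0 \<le> s" "s \<le> 1" for s
    using that unfolding \<gamma>_def by (rule closed_segment_param)
  have "\<gamma> m \<in> open_segment a b"
    using \<open>a \<noteq> b\<close> assms(3-5) unfolding \<gamma>_def m_def by (intro open_segment_param) auto
  then obtain r where r: "r > 0" "closure \<Gamma>C \<inter> ball (\<gamma> m) r \<subseteq> closed_segment a b"
    using closure_edges_locally_segment[OF contact_setting_triangulation[OF set]
        contact_setting_GammaC_edges[OF set] ab] by blast
  have "\<gamma> m \<in> closure \<Gamma>C" using \<gamma>_seg seg assms(3-5) by (auto simp: m_def)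
  moreover have "0 < min r (\<delta> * norm (b - a))" using r(1) nba assms(4) by (simp add: \<delta>_def)
  ultimately obtain q where q: "q \<in> \<Gamma>C" "dist q (\<gamma> m) < min r (\<delta> * norm (b - a))"
    using closure_approachable by blast
  then have "q \<in> closure \<Gamma>C \<inter> ball (\<gamma> m) r" using closure_subset by (auto simp: dist_commute)
  then have "q \<in> closed_segment a b" using r(2) by blast
  then obtain u where "q = (1 - u) *\<^sub>R a + u *\<^sub>R b" unfolding in_segment by blast
  then have q_u: "q = \<gamma> u" by (simp add: \<gamma>_def algebra_simps)
  have "dist q (\<gamma> m) = \<bar>u - m\<bar> * norm (b - a)"
    by (simp add: q_u \<gamma>_def dist_norm flip: scaleR_diff_left)
  then have "\<bar>u - m\<bar> < \<delta>" using q(2) nba by simp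
  then have u_in: "\<alpha> < u" "u < \<beta>" unfolding m_def \<delta>_def by (simp_all add: abs_less_iff field_simps)
  obtain U where U: "open U" "\<Gamma>C = frontier \<Omega> \<inter> U"
    using contact_setting_GammaC_open[OF set] by blast
  have "open (\<gamma> -` U)" unfolding \<gamma>_def
    by (intro continuous_open_vimage U(1)) (auto intro!: continuous_intros)
  moreover have "u \<in> \<gamma> -` U" using q(1) q_u U(2) by simp
  ultimately obtain \<epsilon> where \<epsilon>: "\<epsilon> > 0" "ball u \<epsilon> \<subseteq> \<gamma> -` U"
    using open_contains_ball by blast
  define u2 where "u2 = min (u + \<epsilon> / 2) ((u + \<beta>) / 2)"
  have u2: "u < u2" "u2 < \<beta>" "u2 < u + \<epsilon>" using \<epsilon>(1) u_in unfolding u2_def by (auto simp: min_def)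
  have "\<gamma> s \<in> \<Gamma>C" if s: "s \<in> {u..u2}" for s
  proof -
    have "s \<in> ball u \<epsilon>" using s u2 by (simp add: dist_real_def)
    then have "\<gamma> s \<in> U" using \<epsilon>(2) by blast
    moreover have "\<gamma> s \<in> frontier \<Omega>"
      using \<gamma>_seg[of s] s u_in u2 assms(3-5) seg contact_setting_closure_GammaC[OF set] by auto
    ultimately show ?thesis using U(2) by blast
  qed
  then show ?thesis using u_in u2 unfolding \<gamma>_def by (intro exI[of _ u] exI[of _ u2]) auto
qed

section \<open>Positivity of the nodal weights\<close>

lemma seg_integral_nonneg:
  assumes "\<And>t. 0 \<le> t \<Longrightarrow> t \<le> 1 \<Longrightarrow> 0 \<le> F (a + t *\<^sub>R (b - a))"
  shows "0 \<le> seg_integral a b F"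
proof (cases "(\<lambda>t. F (a + t *\<^sub>R (b - a))) integrable_on {0..1}")
  case True
  then show ?thesis
    using assms unfolding seg_integral_def by (auto intro!: mult_nonneg_nonneg integral_nonneg)
qed (simp add: seg_integral_def not_integrable_integral)

lemma seg_integral_pos:
  assumes "a \<noteq> b" and int: "(\<lambda>t. F (a + t *\<^sub>R (b - a))) integrable_on {0..1}"
    and nonneg: "\<And>t. 0 \<le> t \<Longrightarrow> t \<le> 1 \<Longrightarrow> 0 \<le> F (a + t *\<^sub>R (b - a))"
    and "0 \<le> u" "u < v" "v \<le> 1" "c > 0"
    and big: "\<And>t. u \<le> t \<Longrightarrow> t \<le> v \<Longrightarrow> c \<le> F (a + t *\<^sub>R (b - a))"
  shows "0 < seg_integral a b F"
proof -
  let ?h = "\<lambda>t. F (a + t *\<^sub>R (b - a))"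
  have sub: "{u..v} \<subseteq> {0..1}" using assms(4-6) by auto
  have "0 < c * (v - u)" using assms(5,7) by simp
  also have "\<dots> = integral {u..v} (\<lambda>_. c)" using assms(5) by simp
  also have "\<dots> \<le> integral {u..v} ?h"
    using big integrable_on_subinterval[OF int sub] by (intro integral_le) auto
  also have "\<dots> \<le> integral {0..1} ?h"
    using sub nonneg integrable_on_subinterval[OF int sub] int by (intro integral_subset_le) auto
  finally show ?thesis using assms(1) by (simp add: seg_integral_def)
qed

lemma bint_pos_of_edge:
  assumes "finite (edges_on Tr G)" and ab: "(a, b) \<in> edges_on Tr G"
    and nonneg: "\<And>c d t. (c, d) \<in> edges_on Tr G \<Longrightarrow> 0 \<le> t \<Longrightarrow> t \<le> 1 \<Longrightarrow> 0 \<le> F (c + t *\<^sub>R (d - c))"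
    and pos: "0 < seg_integral a b (\<lambda>x. indicator S x * F x)"
  shows "0 < bint Tr G S F"
proof -
  let ?I = "\<lambda>(c, d). seg_integral c d (\<lambda>x. indicator S x * F x)"
  have "?I (a, b) \<le> sum ?I (edges_on Tr G)"
    using assms(1) ab nonneg
    by (intro member_le_sum) (auto intro!: seg_integral_nonneg simp: indicator_def)
  then show ?thesis using pos by (simp add: bint_def)
qed

lemma integrable_indicator_segment:
  fixes a b :: "'a::euclidean_space" and f :: "real \<Rightarrow> real"
  assumes "S \<in> sets borel" "continuous_on {0..1} f"
  shows "(\<lambda>t. indicator S (a + t *\<^sub>R (b - a)) * f t) integrable_on {0..1::real}"
proof -
  define G where "G = {t::real. a + t *\<^sub>R (b - a) \<in> S}"
  have "(\<lambda>t::real. a + t *\<^sub>R (b - a)) \<in> borel_measurable (lebesgue_on UNIV)"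
    by (intro continuous_imp_measurable_on_sets_lebesgue) (auto intro!: continuous_intros)
  then have "(\<lambda>t::real. a + t *\<^sub>R (b - a)) \<in> borel_measurable lebesgue"
    by (simp add: lebesgue_on_UNIV_eq)
  then have "G \<in> sets lebesgue"
    unfolding G_def using assms(1) by (rule lebesgue_measurable_vimage_borel)
  then have "indicator G \<in> borel_measurable (lebesgue_on {0..1})"
    by (intro measurable_restrict_space1 borel_measurable_indicator)
  moreover have "bounded (indicator G ` {0..1} :: real set)"
    by (rule bounded_subset[of "{0, 1}"]) (auto simp: indicator_def)
  moreover have "f absolutely_integrable_on {0..1}"
    using assms(2) by (rule absolutely_integrable_continuous_real)
  ultimately have "(\<lambda>t. indicator G t * f t) absolutely_integrable_on {0..1}"
    by (intro absolutely_integrable_bounded_measurable_product_real) auto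
  moreover have "(\<lambda>t. indicator S (a + t *\<^sub>R (b - a)) * f t) = (\<lambda>t. indicator G t * f t)"
    by (simp add: G_def indicator_def)
  ultimately show ?thesis by (simp add: absolutely_integrable_on_def)
qed

lemma gammaC_borel:
  assumes "contact_setting \<Omega> \<Gamma>D \<Gamma>N \<Gamma>C Tr"
  shows "gammaC Tr \<Gamma>C z \<in> sets borel"
proof -
  obtain U where "open U" "\<Gamma>C = frontier \<Omega> \<inter> U"
    using contact_setting_GammaC_open[OF assms] by blast
  then have "gammaC Tr \<Gamma>C z = (frontier (patch Tr z) \<inter> frontier \<Omega>) \<inter> U"
    by (auto simp: gammaC_def)
  then show ?thesis using \<open>open U\<close> by simp
qed

lemma bint_gammaC_pos_of_edge:
  assumes set: "contact_setting \<Omega> \<Gamma>D \<Gamma>N \<Gamma>C Tr" and phi: "Q1_basis Tr \<Gamma>C \<phi>"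
    and z: "z \<in> contact_nodes Tr \<Gamma>C" "z \<in> closed_segment a b"
    and ab: "(a, b) \<in> edges_on Tr \<Gamma>C"
    and "0 < \<alpha>" "\<alpha> < \<beta>" "\<beta> < 1"
    and big: "\<And>s. \<alpha> \<le> s \<Longrightarrow> s \<le> \<beta> \<Longrightarrow> 1/2 \<le> \<phi> z (a + s *\<^sub>R (b - a))"
  shows "0 < bint Tr \<Gamma>C (gammaC Tr \<Gamma>C z) (\<phi> z)"
proof -
  obtain K where K: "K \<in> Tr" "a \<in> K" "b \<in> K" and "a \<noteq> b" and seg: "closed_segment a b \<subseteq> closure \<Gamma>C"
    using ab by (auto simp: edges_on_def edge_pairs_def)
  obtain t1 t2 where t: "\<alpha> < t1" "t1 < t2" "t2 < \<beta>"
    and t_GammaC: "\<And>s. s \<in> {t1..t2} \<Longrightarrow> a + s *\<^sub>R (b - a) \<in> \<Gamma>C"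
    using edge_contains_GammaC_interval[OF set ab assms(6-8)] by blast
  have "continuous_on (closure \<Gamma>C) (\<phi> z)"
    using phi z(1) by (simp add: Q1_basis_def Qh_space_def)
  moreover have "continuous_on {0..1} (\<lambda>s::real. a + s *\<^sub>R (b - a))"
    by (intro continuous_intros)
  moreover have "(\<lambda>s. a + s *\<^sub>R (b - a)) ` {0..1} \<subseteq> closure \<Gamma>C"
    by (auto intro!: subsetD[OF seg] closed_segment_param)
  ultimately have "continuous_on {0..1} (\<lambda>s. \<phi> z (a + s *\<^sub>R (b - a)))"
    by (rule continuous_on_compose2)
  then have "(\<lambda>s. indicator (gammaC Tr \<Gamma>C z) (a + s *\<^sub>R (b - a)) * \<phi> z (a + s *\<^sub>R (b - a)))
      integrable_on {0..1}"
    by (rule integrable_indicator_segment[OF gammaC_borel[OF set]])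
  moreover have "0 \<le> indicator (gammaC Tr \<Gamma>C z) (a + s *\<^sub>R (b - a)) * \<phi> z (a + s *\<^sub>R (b - a))"
    if "0 \<le> s" "s \<le> 1" for s
    using Q1_basis_nonneg_on_edge[OF phi z(1) ab that] by simp
  moreover have "1/2 \<le> indicator (gammaC Tr \<Gamma>C z) (a + s *\<^sub>R (b - a)) * \<phi> z (a + s *\<^sub>R (b - a))"
    if s: "t1 \<le> s" "s \<le> t2" for s
  proof -
    have "a + s *\<^sub>R (b - a) \<in> convex hull K"
      using closed_segment_param[of s a b] closed_segment_subset_convex_hull[OF K(2,3)] s t assms(6-8)
      by auto
    moreover have "z \<in> convex hull K"
      using z(2) closed_segment_subset_convex_hull[OF K(2,3)] by blast
    moreover have "a + s *\<^sub>R (b - a) \<in> \<Gamma>C" using t_GammaC s by simp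
    ultimately have "a + s *\<^sub>R (b - a) \<in> gammaC Tr \<Gamma>C z"
      using GammaC_mem_gammaC[OF set _ K(1)] by blast
    then show ?thesis using big[of s] s t by simp
  qed
  ultimately have "0 < seg_integral a b (\<lambda>x. indicator (gammaC Tr \<Gamma>C z) x * \<phi> z x)"
    using \<open>a \<noteq> b\<close> t assms(6-8)
    by (intro seg_integral_pos[where u = t1 and v = t2 and c = "1/2"]) auto
  then show ?thesis
    using Q1_basis_nonneg_on_edge[OF phi z(1)]
    by (intro bint_pos_of_edge[OF finite_edges_on[OF contact_setting_triangulation[OF set]] ab]) blast+
qed

lemma bint_gammaC_pos:
  assumes set: "contact_setting \<Omega> \<Gamma>D \<Gamma>N \<Gamma>C Tr" and phi: "Q1_basis Tr \<Gamma>C \<phi>"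
    and z: "z \<in> contact_nodes Tr \<Gamma>C"
  shows "0 < bint Tr \<Gamma>C (gammaC Tr \<Gamma>C z) (\<phi> z)"
proof -
  have q: "\<phi> z \<in> Qh_space Tr \<Gamma>C" and one: "\<phi> z z = 1"
    using phi z by (auto simp: Q1_basis_def)
  consider "z \<in> verts_on Tr \<Gamma>C" | "z \<in> mids_on Tr \<Gamma>C" using z by (auto simp: contact_nodes_def)
  then show ?thesis
  proof cases
    case 1
    then obtain K' where K': "K' \<in> Tr" "z \<in> K'" "z \<in> closure \<Gamma>C"
      by (auto simp: verts_on_def verts_def)
    then obtain a b where ab: "(a, b) \<in> edges_on Tr \<Gamma>C" "z \<in> closed_segment a b"
      using contact_setting_GammaC_edges[OF set] unfolding union_of_edges_def by auto
    then have "z = a \<or> z = b"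
      using vertex_on_edge[OF contact_setting_triangulation[OF set] _ K'(1,2)]
      by (auto simp: edges_on_def)
    then obtain b' where zb: "(z, b') \<in> edges_on Tr \<Gamma>C" using ab edges_on_commute by metis
    have mid: "0 \<le> \<phi> z (midpoint z b')"
      using phi z edges_on_contact_nodes(3)[OF zb] by (auto simp: Q1_basis_def)
    have aff: "affine_on_seg z (midpoint z b') (\<phi> z)" using q zb by (auto simp: Qh_space_def)
    have "1/2 \<le> \<phi> z (z + s *\<^sub>R (b' - z))" if s: "1/8 \<le> s" "s \<le> 1/4" for s
    proof -
      have "\<phi> z (z + s *\<^sub>R (b' - z)) = (1 - 2 * s) + 2 * s * \<phi> z (midpoint z b')"
        using affine_on_seg_first_half[OF aff, of s] s one by simp
      moreover have "0 \<le> 2 * s * \<phi> z (midpoint z b')" using s mid by simp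
      ultimately show ?thesis using s by linarith
    qed
    then show ?thesis
      by (intro bint_gammaC_pos_of_edge[OF set phi z _ zb, of "1/8" "1/4"]) auto
  next
    case 2
    then obtain a b where ab: "(a, b) \<in> edges_on Tr \<Gamma>C" and zm: "z = midpoint a b"
      by (auto simp: mids_on_def)
    have end_a: "0 \<le> \<phi> z a"
      using phi z edges_on_contact_nodes(1)[OF ab] by (auto simp: Q1_basis_def)
    have aff: "affine_on_seg a (midpoint a b) (\<phi> z)" using q ab by (auto simp: Qh_space_def)
    have "1/2 \<le> \<phi> z (a + s *\<^sub>R (b - a))" if s: "1/4 \<le> s" "s \<le> 1/2" for s
    proof -
      have "\<phi> z (a + s *\<^sub>R (b - a)) = (1 - 2 * s) * \<phi> z a + 2 * s"
        using affine_on_seg_first_half[OF aff, of s] s one zm by simp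
      moreover have "0 \<le> (1 - 2 * s) * \<phi> z a" using s end_a by simp
      ultimately show ?thesis using s by linarith
    qed
    moreover have "z \<in> closed_segment a b" using zm by simp
    ultimately show ?thesis
      by (intro bint_gammaC_pos_of_edge[OF set phi z _ ab, of "1/4" "1/2"]) auto
  qed
qed

section \<open>Testing the discrete problem with nodal functions\<close>

lemma P2_on_add_scale:
  assumes "P2_on T f" "P2_on T g"
  shows "P2_on T (\<lambda>x. f x + r * g x)"
proof -
  obtain c d :: "nat \<Rightarrow> real" where
    c: "\<forall>x\<in>T. f x = c 0 + c 1 * fst x + c 2 * snd x + c 3 * (fst x)\<^sup>2 + c 4 * (fst x * snd x) + c 5 * (snd x)\<^sup>2"
    and d: "\<forall>x\<in>T. g x = d 0 + d 1 * fst x + d 2 * snd x + d 3 * (fst x)\<^sup>2 + d 4 * (fst x * snd x) + d 5 * (snd x)\<^sup>2"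
    using assms unfolding P2_on_def by blast
  show ?thesis unfolding P2_on_def
    by (rule exI[of _ "\<lambda>k. c k + r * d k"]) (use c d in \<open>auto simp: algebra_simps\<close>)
qed

lemma affine_on_seg_scaleR:
  fixes q :: "pt \<Rightarrow> real"
  assumes "affine_on_seg p r q"
  shows "affine_on_seg p r (\<lambda>x. (c * q x) *\<^sub>R v)"
  unfolding affine_on_seg_def
proof
  fix t :: real assume "t \<in> {0..1}"
  then have "q (p + t *\<^sub>R (r - p)) = (1 - t) * q p + t * q r"
    using assms unfolding affine_on_seg_def by simp
  then have "c * q (p + t *\<^sub>R (r - p)) = c * ((1 - t) * q p + t * q r)"
    by simp
  also have "\<dots> = (1 - t) * (c * q p) + t * (c * q r)"
    by (simp add: algebra_simps)
  finally have "c * q (p + t *\<^sub>R (r - p)) = (1 - t) * (c * q p) + t * (c * q r)" .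
  then show "(c * q (p + t *\<^sub>R (r - p))) *\<^sub>R v = (1 - t) *\<^sub>R (c * q p) *\<^sub>R v + t *\<^sub>R (c * q r) *\<^sub>R v"
    by (simp add: scaleR_add_left)
qed

lemma Qh_space_scaleR:
  fixes q :: "pt \<Rightarrow> real"
  assumes "q \<in> Qh_space Tr G"
  shows "(\<lambda>x. (c * q x) *\<^sub>R v) \<in> Qh_space Tr G"
  using assms unfolding Qh_space_def by (auto intro!: continuous_intros affine_on_seg_scaleR)

lemma comp_scaleR_e:
  "i \<in> {1, 2} \<Longrightarrow> j \<in> {1, 2} \<Longrightarrow> comp j (r *\<^sub>R e i) = (if j = i then r else 0)"
  by (auto simp: e_def comp_def)

lemma inner_e: "i \<in> {1, 2} \<Longrightarrow> l \<bullet> e i = comp i l"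
  by (cases l) (auto simp: e_def comp_def)

lemma disc_ip_nodal:
  assumes "finite (contact_nodes Tr G)" "Q1_basis Tr G \<phi>" "z \<in> contact_nodes Tr G" "i \<in> {1, 2}"
  shows "disc_ip Tr G \<phi> lam (\<lambda>x. (c * \<phi> z x) *\<^sub>R e i)
    = c * comp i (lam z) * bint Tr G (gammaC Tr G z) (\<phi> z)"
proof -
  let ?B = "\<lambda>z'. bint Tr G (gammaC Tr G z') (\<phi> z')"
  have "(lam z' \<bullet> (c * \<phi> z z') *\<^sub>R e i) * ?B z'
      = (if z' = z then c * comp i (lam z) * ?B z else 0)" if "z' \<in> contact_nodes Tr G" for z'
    using assms(2-4) that by (simp add: Q1_basis_def inner_e)
  then have "disc_ip Tr G \<phi> lam (\<lambda>x. (c * \<phi> z x) *\<^sub>R e i)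
      = (\<Sum>z'\<in>contact_nodes Tr G. if z' = z then c * comp i (lam z) * ?B z else 0)"
    unfolding disc_ip_def by (rule sum.cong[OF refl])
  then show ?thesis using assms(1,3) by simp
qed

lemma pi_h_nodal:
  assumes "finite (contact_nodes Tr G)" "Q1_basis Tr G \<phi>" "z \<in> contact_nodes Tr G" "i \<in> {1, 2}"
  shows "pi_h Tr G \<psi> (\<lambda>x. (c * \<phi> z x) *\<^sub>R e i) = (\<lambda>x. (c * \<psi> z x) *\<^sub>R e i)"
proof
  fix x
  have "(\<Sum>j\<in>{1, 2}. (comp j ((c * \<phi> z z') *\<^sub>R e i) * \<psi> z' x) *\<^sub>R e j)
      = (if z' = z then (c * \<psi> z x) *\<^sub>R e i else 0)" if "z' \<in> contact_nodes Tr G" for z'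
  proof -
    have "\<phi> z z' = (if z' = z then 1 else 0)" using assms(2,3) that by (auto simp: Q1_basis_def)
    then show ?thesis using assms(4) by (auto simp: comp_scaleR_e)
  qed
  then have "pi_h Tr G \<psi> (\<lambda>x. (c * \<phi> z x) *\<^sub>R e i) x
      = (\<Sum>z'\<in>contact_nodes Tr G. if z' = z then (c * \<psi> z x) *\<^sub>R e i else 0)"
    unfolding pi_h_def by (intro sum.cong) auto
  then show "pi_h Tr G \<psi> (\<lambda>x. (c * \<phi> z x) *\<^sub>R e i) x = (c * \<psi> z x) *\<^sub>R e i"
    using assms(1,3) by simp
qed

lemma Kh_space_add_nodal:
  assumes u: "u \<in> Kh_space \<Omega> \<Gamma>D \<Gamma>C Tr" and psi: "P2_basis \<Omega> \<Gamma>D Tr \<psi>"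
    and CF: "contact_nodes Tr \<Gamma>C \<subseteq> free_nodes Tr \<Gamma>D" and z: "z \<in> contact_nodes Tr \<Gamma>C"
    and i: "i \<in> {1, 2}" and sign: "i = 2 \<or> c \<le> 0"
  shows "(\<lambda>x. u x + (c * \<psi> z x) *\<^sub>R e i) \<in> Kh_space \<Omega> \<Gamma>D \<Gamma>C Tr"
proof -
  have psiz: "continuous_on (closure \<Omega>) (\<psi> z)" "\<And>K. K \<in> Tr \<Longrightarrow> P2_on (convex hull K) (\<psi> z)"
    "\<And>x. x \<in> \<Gamma>D \<Longrightarrow> \<psi> z x = 0" "\<And>z'. z' \<in> contact_nodes Tr \<Gamma>C \<Longrightarrow> 0 \<le> \<psi> z z'"
  proof -
    have "z \<in> free_nodes Tr \<Gamma>D" using z CF by blast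
    then show "continuous_on (closure \<Omega>) (\<psi> z)" "\<And>K. K \<in> Tr \<Longrightarrow> P2_on (convex hull K) (\<psi> z)"
      "\<And>x. x \<in> \<Gamma>D \<Longrightarrow> \<psi> z x = 0"
      using psi unfolding P2_basis_def by blast+
    fix z' assume "z' \<in> contact_nodes Tr \<Gamma>C"
    then have "\<psi> z z' = (if z' = z then 1 else 0)"
      using psi \<open>z \<in> free_nodes Tr \<Gamma>D\<close> CF unfolding P2_basis_def by blast
    then show "0 \<le> \<psi> z z'" by simp
  qed
  have comps: "fst (u x + (c * \<psi> z x) *\<^sub>R e i) = fst (u x) + (c * comp 1 (e i)) * \<psi> z x"
    "snd (u x + (c * \<psi> z x) *\<^sub>R e i) = snd (u x) + (c * comp 2 (e i)) * \<psi> z x" for x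
    by (auto simp: e_def comp_def)
  have uV: "continuous_on (closure \<Omega>) u"
    "\<And>K. K \<in> Tr \<Longrightarrow> P2_on (convex hull K) (\<lambda>x. fst (u x)) \<and> P2_on (convex hull K) (\<lambda>x. snd (u x))"
    "\<And>x. x \<in> \<Gamma>D \<Longrightarrow> u x = 0" "\<And>z'. z' \<in> contact_nodes Tr \<Gamma>C \<Longrightarrow> fst (u z') \<le> 0"
    using u unfolding Kh_space_def Vh_space_def by blast+
  show ?thesis
    unfolding Kh_space_def Vh_space_def
  proof (intro CollectI conjI ballI)
    show "continuous_on (closure \<Omega>) (\<lambda>x. u x + (c * \<psi> z x) *\<^sub>R e i)"
      by (intro continuous_intros uV(1) psiz(1))
  next
    fix K assume K: "K \<in> Tr"
    show "P2_on (convex hull K) (\<lambda>x. fst (u x + (c * \<psi> z x) *\<^sub>R e i))"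
      unfolding comps using uV(2)[OF K] psiz(2)[OF K] by (intro P2_on_add_scale) auto
    show "P2_on (convex hull K) (\<lambda>x. snd (u x + (c * \<psi> z x) *\<^sub>R e i))"
      unfolding comps using uV(2)[OF K] psiz(2)[OF K] by (intro P2_on_add_scale) auto
  next
    fix x assume "x \<in> \<Gamma>D"
    then show "u x + (c * \<psi> z x) *\<^sub>R e i = 0" using uV(3) psiz(3) by simp
  next
    fix z' assume z': "z' \<in> contact_nodes Tr \<Gamma>C"
    have "c * comp 1 (e i) * \<psi> z z' \<le> 0"
      using sign i psiz(4)[OF z'] by (auto simp: e_def comp_def mult_nonpos_nonneg)
    then show "fst (u z' + (c * \<psi> z z') *\<^sub>R e i) \<le> 0" unfolding comps using uV(4)[OF z'] by simp
  qed
qed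

lemma multiplier_sign:
  assumes set: "contact_setting \<Omega> \<Gamma>D \<Gamma>N \<Gamma>C Tr"
    and psi: "P2_basis \<Omega> \<Gamma>D Tr \<psi>" and phi: "Q1_basis Tr \<Gamma>C \<phi>"
    and uK: "u \<in> Kh_space \<Omega> \<Gamma>D \<Gamma>C Tr"
    and VI: "\<forall>v\<in>Kh_space \<Omega> \<Gamma>D \<Gamma>C Tr.
               a_form chi \<mu> \<Omega> u (\<lambda>x. v x - u x) \<ge> L_form \<Omega> Tr \<Gamma>N f g (\<lambda>x. v x - u x)"
    and lamdef: "\<forall>w\<in>Qh_space Tr \<Gamma>C.
               disc_ip Tr \<Gamma>C \<phi> lam w
                 = L_form \<Omega> Tr \<Gamma>N f g (pi_h Tr \<Gamma>C \<psi> w) - a_form chi \<mu> \<Omega> u (pi_h Tr \<Gamma>C \<psi> w)"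
    and z: "z \<in> contact_nodes Tr \<Gamma>C" and i: "i \<in> {1, 2}" and sign: "i = 2 \<or> c \<le> 0"
  shows "c * comp i (lam z) * bint Tr \<Gamma>C (gammaC Tr \<Gamma>C z) (\<phi> z) \<le> 0"
proof -
  define w where "w x = (c * \<phi> z x) *\<^sub>R e i" for x
  define \<pi> where "\<pi> x = (c * \<psi> z x) *\<^sub>R e i" for x
  have fin: "finite (contact_nodes Tr \<Gamma>C)"
    using finite_contact_nodes[OF contact_setting_triangulation[OF set]] .
  have "w \<in> Qh_space Tr \<Gamma>C"
    unfolding w_def using phi z by (intro Qh_space_scaleR) (auto simp: Q1_basis_def)
  then have "c * comp i (lam z) * bint Tr \<Gamma>C (gammaC Tr \<Gamma>C z) (\<phi> z)
      = L_form \<Omega> Tr \<Gamma>N f g \<pi> - a_form chi \<mu> \<Omega> u \<pi>"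
    using lamdef disc_ip_nodal[OF fin phi z i] pi_h_nodal[OF fin phi z i]
    unfolding w_def \<pi>_def by metis
  moreover have "(\<lambda>x. u x + \<pi> x) \<in> Kh_space \<Omega> \<Gamma>D \<Gamma>C Tr"
    unfolding \<pi>_def using contact_nodes_subset_free_nodes[OF contact_setting_closures_disjoint[OF set]]
    by (rule Kh_space_add_nodal[OF uK psi _ z i sign])
  then have "L_form \<Omega> Tr \<Gamma>N f g \<pi> \<le> a_form chi \<mu> \<Omega> u \<pi>" using VI by fastforce
  ultimately show ?thesis by linarith
qed

lemma multiplier_at_contact_nodes:
  assumes set: "contact_setting \<Omega> \<Gamma>D \<Gamma>N \<Gamma>C Tr"
    and psi: "P2_basis \<Omega> \<Gamma>D Tr \<psi>" and phi: "Q1_basis Tr \<Gamma>C \<phi>"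
    and uK: "u \<in> Kh_space \<Omega> \<Gamma>D \<Gamma>C Tr"
    and VI: "\<forall>v\<in>Kh_space \<Omega> \<Gamma>D \<Gamma>C Tr.
               a_form chi \<mu> \<Omega> u (\<lambda>x. v x - u x) \<ge> L_form \<Omega> Tr \<Gamma>N f g (\<lambda>x. v x - u x)"
    and lamdef: "\<forall>w\<in>Qh_space Tr \<Gamma>C.
               disc_ip Tr \<Gamma>C \<phi> lam w
                 = L_form \<Omega> Tr \<Gamma>N f g (pi_h Tr \<Gamma>C \<psi> w) - a_form chi \<mu> \<Omega> u (pi_h Tr \<Gamma>C \<psi> w)"
    and z: "z \<in> contact_nodes Tr \<Gamma>C"
  shows "0 \<le> fst (lam z)" "snd (lam z) = 0"
proof -
  let ?B = "bint Tr \<Gamma>C (gammaC Tr \<Gamma>C z) (\<phi> z)"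
  note sign = multiplier_sign[OF set psi phi uK VI lamdef z]
  have B: "0 < ?B" using bint_gammaC_pos[OF set phi z] .
  have "(-1) * comp 1 (lam z) * ?B \<le> 0" by (rule sign) auto
  then show "0 \<le> fst (lam z)" using B by (simp add: comp_def zero_le_mult_iff)
  have "1 * comp 2 (lam z) * ?B \<le> 0" "(-1) * comp 2 (lam z) * ?B \<le> 0" by (rule sign; simp)+
  then have "comp 2 (lam z) * ?B = 0" by linarith
  then show "snd (lam z) = 0" using B by (simp add: comp_def)
qed

lemma lam_tilde_eq_lam_tilde_fst:
  assumes "\<And>z. z \<in> contact_nodes Tr G \<Longrightarrow> snd (lam z) = 0"
  shows "lam_tilde Tr G \<phi> lam v = lam_tilde_i Tr G \<phi> lam 1 (\<lambda>x. fst (v x))"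
proof -
  have "lam_tilde_i Tr G \<phi> lam 2 w = 0" for w
    using assms by (simp add: lam_tilde_i_def bint_def seg_integral_def comp_def)
  then show ?thesis by (simp add: lam_tilde_def comp_def)
qed

lemma lam_tilde_i_nonneg:
  assumes phi: "Q1_basis Tr G \<phi>" and lam: "\<And>z. z \<in> contact_nodes Tr G \<Longrightarrow> 0 \<le> comp i (lam z)"
    and w: "\<And>x. x \<in> G \<Longrightarrow> 0 \<le> w x"
  shows "0 \<le> lam_tilde_i Tr G \<phi> lam i w"
proof -
  let ?F = "\<lambda>x. indicator G x * ((\<Sum>z\<in>contact_nodes Tr G. comp i (lam z) * \<phi> z x) * w x)"
  have "0 \<le> seg_integral a b ?F" if ab: "(a, b) \<in> edges_on Tr G" for a b
  proof (rule seg_integral_nonneg)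
    fix t :: real assume t: "0 \<le> t" "t \<le> 1"
    have "0 \<le> (\<Sum>z\<in>contact_nodes Tr G. comp i (lam z) * \<phi> z (a + t *\<^sub>R (b - a)))"
      using lam Q1_basis_nonneg_on_edge[OF phi _ ab t] by (intro sum_nonneg mult_nonneg_nonneg) auto
    then show "0 \<le> ?F (a + t *\<^sub>R (b - a))" using w by (simp add: indicator_def)
  qed
  then show ?thesis
    unfolding lam_tilde_i_def bint_def by (intro mult_nonneg_nonneg sum_nonneg) auto
qed

theorem lemma4p1:
  fixes \<Omega> \<Gamma>D \<Gamma>N \<Gamma>C :: "pt set" and Tr :: "pt set set" and chi \<mu> :: real
    and f g u lam :: "pt \<Rightarrow> pt" and \<psi> \<phi> :: "pt \<Rightarrow> pt \<Rightarrow> real"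
  assumes setting: "contact_setting \<Omega> \<Gamma>D \<Gamma>N \<Gamma>C Tr"
    and lame: "chi > 0" "\<mu> > 0"
    and data: "L2_dom \<Omega> f" "L2_bd Tr \<Gamma>N g"
    and psi: "P2_basis \<Omega> \<Gamma>D Tr \<psi>"
    and phi: "Q1_basis Tr \<Gamma>C \<phi>"
    and uK: "u \<in> Kh_space \<Omega> \<Gamma>D \<Gamma>C Tr"
    and VI: "\<forall>v\<in>Kh_space \<Omega> \<Gamma>D \<Gamma>C Tr.
               a_form chi \<mu> \<Omega> u (\<lambda>x. v x - u x) \<ge> L_form \<Omega> Tr \<Gamma>N f g (\<lambda>x. v x - u x)"
    and lamQ: "lam \<in> Qh_space Tr \<Gamma>C"
    and lamdef: "\<forall>w\<in>Qh_space Tr \<Gamma>C.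
               disc_ip Tr \<Gamma>C \<phi> lam w
                 = L_form \<Omega> Tr \<Gamma>N f g (pi_h Tr \<Gamma>C \<psi> w) - a_form chi \<mu> \<Omega> u (pi_h Tr \<Gamma>C \<psi> w)"
  shows "\<forall>v :: pt \<Rightarrow> pt. (\<forall>x\<in>\<Gamma>D. v x = 0) \<longrightarrow>
           lam_tilde Tr \<Gamma>C \<phi> lam v = lam_tilde_i Tr \<Gamma>C \<phi> lam 1 (\<lambda>x. fst (v x)) \<and>
           ((\<forall>x\<in>closure \<Omega>. fst (v x) \<ge> 0) \<longrightarrow> lam_tilde_i Tr \<Gamma>C \<phi> lam 1 (\<lambda>x. fst (v x)) \<ge> 0)"
proof (intro allI impI conjI)
  note lam_nodal = multiplier_at_contact_nodes[OF setting psi phi uK VI lamdef]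
  fix v :: "pt \<Rightarrow> pt"
  show "lam_tilde Tr \<Gamma>C \<phi> lam v = lam_tilde_i Tr \<Gamma>C \<phi> lam 1 (\<lambda>x. fst (v x))"
    using lam_nodal(2) by (rule lam_tilde_eq_lam_tilde_fst)
  assume "\<forall>x\<in>closure \<Omega>. fst (v x) \<ge> 0"
  moreover have "\<Gamma>C \<subseteq> closure \<Omega>"
    using contact_setting_closure_GammaC[OF setting] closure_subset frontier_def by fastforce
  ultimately show "lam_tilde_i Tr \<Gamma>C \<phi> lam 1 (\<lambda>x. fst (v x)) \<ge> 0"
    using lam_nodal(1) by (intro lam_tilde_i_nonneg[OF phi]) (auto simp: comp_def)
qed

end
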